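(* Let $\Omega\subset\mathbb{R}^d$ be a bounded domain, let $k\ge 1$ be an integer, and for each $n\ge 1$ let $V_n$ denote the set of shallow $\mathrm{ReLU}^k$ neural network functions with $n$ neurons on $\Omega$, i.e. $$V_n=\Big\{\sum_{i=1}^n a_i\,\sigma_k(\boldsymbol{\omega}_i\cdot\boldsymbol{x}+b_i):\ a_i\in\mathbb{R},\ \boldsymbol{\omega}_i\in S^{d-1},\ b_i\in[c_1,c_2]\Big\}\subset H^1(\Omega).$$ Let $V$ be a compact subset of $H^1(\Omega)$. Then for every $\varepsilon>0$ there exists $n_0=n_0(\varepsilon,V)$ such that for every $v\in V$ and every $n>n_0$ there exists $\chi\in V_n$ with $\|v-\chi\|_{1}\le\varepsilon$.
   Context: $\sigma_k(t)=\max\{0,t\}^k$; $S^{d-1}=\{\boldsymbol{\omega}\in\mathbb{R}^d:|\boldsymbol{\omega}|=1\}$; the constants $c_1<c_2$ satisfy $c_1<\inf\{\boldsymbol{\omega}\cdot\boldsymbol{x}:\boldsymbol{x}\in\Omega,\boldsymbol{\omega}\in S^{d-1}\}$ and $\sup\{\boldsymbol{\omega}\cdot\boldsymbol{x}:\boldsymbol{x}\in\Omega,\boldsymbol{\omega}\in S^{d-1}\}<c_2$. $\|\cdot\|_1$ is the standard $H^1(\Omega)$ norm. (It is used that for every $u\in H^1(\Omega)$ and $\varepsilon>0$ there is some $n$ and some $\chi\in V_n$ with $\|u-\chi\|_1\le\varepsilon$.) *)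

theory Defs
  imports "HOL-Analysis.Analysis"
begin

definition relu_pow :: "nat \<Rightarrow> real \<Rightarrow> real" where
  "relu_pow k t = (max 0 t) ^ k"

definition pdir :: "'a::euclidean_space \<Rightarrow> ('a \<Rightarrow> real) \<Rightarrow> 'a \<Rightarrow> real" where
  "pdir i f x = frechet_derivative f (at x) i"

definition iter_pdir :: "'a::euclidean_space list \<Rightarrow> ('a \<Rightarrow> real) \<Rightarrow> 'a \<Rightarrow> real" where
  "iter_pdir js f = foldr pdir js f"

definition smooth_fun :: "('a::euclidean_space \<Rightarrow> real) \<Rightarrow> bool" where
  "smooth_fun f \<longleftrightarrow> (\<forall>js. set js \<subseteq> Basis \<longrightarrow> (\<forall>x. iter_pdir js f differentiable (at x)))"

definition test_fun :: "'a::euclidean_space set \<Rightarrow> ('a \<Rightarrow> real) \<Rightarrow> bool" where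
  "test_fun \<Omega> \<phi> \<longleftrightarrow> smooth_fun \<phi> \<and> compact (closure {x. \<phi> x \<noteq> 0})
      \<and> closure {x. \<phi> x \<noteq> 0} \<subseteq> \<Omega>"

definition L2_fun :: "'a::euclidean_space set \<Rightarrow> ('a \<Rightarrow> real) \<Rightarrow> bool" where
  "L2_fun \<Omega> u \<longleftrightarrow> u \<in> borel_measurable (lebesgue_on \<Omega>)
      \<and> integrable (lebesgue_on \<Omega>) (\<lambda>x. (u x)\<^sup>2)"

definition L2_vec :: "'a::euclidean_space set \<Rightarrow> ('a \<Rightarrow> 'a) \<Rightarrow> bool" where
  "L2_vec \<Omega> g \<longleftrightarrow> g \<in> borel_measurable (lebesgue_on \<Omega>)
      \<and> integrable (lebesgue_on \<Omega>) (\<lambda>x. (norm (g x))\<^sup>2)"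

definition weak_grad :: "'a::euclidean_space set \<Rightarrow> ('a \<Rightarrow> real) \<Rightarrow> ('a \<Rightarrow> 'a) \<Rightarrow> bool" where
  "weak_grad \<Omega> u g \<longleftrightarrow> (\<forall>\<phi>. test_fun \<Omega> \<phi> \<longrightarrow> (\<forall>i\<in>Basis.
      integrable (lebesgue_on \<Omega>) (\<lambda>x. u x * pdir i \<phi> x) \<and>
      integrable (lebesgue_on \<Omega>) (\<lambda>x. (g x \<bullet> i) * \<phi> x) \<and>
      (\<integral>x. u x * pdir i \<phi> x \<partial>lebesgue_on \<Omega>) = - (\<integral>x. (g x \<bullet> i) * \<phi> x \<partial>lebesgue_on \<Omega>)))"

text \<open>The Sobolev space H^1(Omega) (functions represented pointwise; only values on Omega matter).\<close>
definition H1 :: "'a::euclidean_space set \<Rightarrow> ('a \<Rightarrow> real) set" where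
  "H1 \<Omega> = {u. L2_fun \<Omega> u \<and> (\<exists>g. L2_vec \<Omega> g \<and> weak_grad \<Omega> u g)}"

definition wgrad :: "'a::euclidean_space set \<Rightarrow> ('a \<Rightarrow> real) \<Rightarrow> 'a \<Rightarrow> 'a" where
  "wgrad \<Omega> u = (SOME g. L2_vec \<Omega> g \<and> weak_grad \<Omega> u g)"

definition H1_norm :: "'a::euclidean_space set \<Rightarrow> ('a \<Rightarrow> real) \<Rightarrow> real" where
  "H1_norm \<Omega> u = sqrt ((\<integral>x. (u x)\<^sup>2 \<partial>lebesgue_on \<Omega>)
                      + (\<integral>x. (norm (wgrad \<Omega> u x))\<^sup>2 \<partial>lebesgue_on \<Omega>))"

text \<open>Compactness of a subset of H^1(Omega) w.r.t. the H^1 norm (sequential compactness,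
  equivalent to compactness in a (pseudo)metric space).\<close>
definition H1_compact :: "'a::euclidean_space set \<Rightarrow> ('a \<Rightarrow> real) set \<Rightarrow> bool" where
  "H1_compact \<Omega> V \<longleftrightarrow> V \<subseteq> H1 \<Omega> \<and>
     (\<forall>s. (\<forall>n. s n \<in> V) \<longrightarrow> (\<exists>l\<in>V. \<exists>r::nat \<Rightarrow> nat. strict_mono r \<and>
         (\<lambda>n. H1_norm \<Omega> (\<lambda>x. s (r n) x - l x)) \<longlonglongrightarrow> 0))"

definition relu_nets :: "nat \<Rightarrow> real \<Rightarrow> real \<Rightarrow> nat \<Rightarrow> ('a::euclidean_space \<Rightarrow> real) set" where
  "relu_nets k c1 c2 n = {\<psi>. \<exists>a w b. (\<forall>i<n. norm (w i) = 1 \<and> b i \<in> {c1..c2}) \<and>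
      \<psi> = (\<lambda>x. \<Sum>i<n. a i * relu_pow k (w i \<bullet> x + b i))}"

end

theory Submission
  imports Defs "HOL-Computational_Algebra.Polynomial"
begin

(* Approximation by nets is stable under small H^1 perturbations: if v is close to l and
   some net with m neurons is close to l, that same net (padded with idle neurons) is close
   to v for every n >= m. A sequence v_j in V with ever larger bad neuron counts has a
   subsequence converging to some l in V, and the net approximating l then contradicts
   badness for large j.
   Formally, the triangle inequality for the H^1 norm requires weak gradients to be unique
   almost everywhere, which rests on approximating indicators of boxes by smooth cutoff
   functions built from exp(-1/t). *)

section \<open>Smooth cutoff functions of boxes\<close>

text \<open>\<open>S\<close> is a family of everywhere differentiable functions closed under differentiation,
  so every member is \<open>C\<^sup>\<infinity>\<close>.\<close>

definition smooth_real :: "(real \<Rightarrow> real) \<Rightarrow> bool" where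
  "smooth_real g \<longleftrightarrow>
     (\<exists>S. g \<in> S \<and> (\<forall>u\<in>S. \<exists>u'\<in>S. \<forall>t. (u has_real_derivative u' t) (at t)))"

lemma smooth_real_exp: "smooth_real exp"
  unfolding smooth_real_def by (rule exI[of _ "{exp}"]) (auto intro: DERIV_exp)

lemma smooth_real_derivative:
  assumes "smooth_real g"
  obtains g' where "smooth_real g'" "\<And>t. (g has_real_derivative g' t) (at t)"
  using assms unfolding smooth_real_def by metis

text \<open>All derivatives of the flat function \<open>exp (- 1 / t)\<close> (extended by \<open>0\<close> for \<open>t \<le> 0\<close>)
  are of the form \<open>p (1 / t) * exp (- 1 / t)\<close> for a polynomial \<open>p\<close>.\<close>

definition exp_neg_inv :: "real poly \<Rightarrow> real \<Rightarrow> real" where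
  "exp_neg_inv p t = (if t > 0 then poly p (inverse t) * exp (- inverse t) else 0)"

lemma tendsto_power_poly_div_exp_0:
  "((\<lambda>s. s ^ k * poly p s / exp s) \<longlongrightarrow> (0::real)) at_top"
proof (induction p arbitrary: k)
  case (pCons a p)
  have "((\<lambda>s. a * (s ^ k / exp s) + s ^ Suc k * poly p s / exp s) \<longlongrightarrow> a * 0 + 0) at_top"
    by (intro tendsto_intros tendsto_power_div_exp_0 pCons.IH)
  then show ?case
    by (simp add: algebra_simps add_divide_distrib)
qed simp

lemma exp_neg_inv_has_derivative:
  "(exp_neg_inv p has_real_derivative exp_neg_inv ([:0,0,1:] * (p - pderiv p)) t) (at t)"
proof -
  consider "t > 0" | "t < 0" | "t = 0" by linarith
  then show ?thesis
  proof cases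
    case 1
    have "((\<lambda>t. poly p (inverse t) * exp (- inverse t)) has_real_derivative
        exp_neg_inv ([:0,0,1:] * (p - pderiv p)) t) (at t)"
      using 1
      by (auto intro!: derivative_eq_intros DERIV_chain2[OF poly_DERIV]
          simp: exp_neg_inv_def algebra_simps power2_eq_square)
    then show ?thesis
      by (rule has_field_derivative_transform_within_open[of _ _ _ "{0<..}"])
        (use 1 in \<open>auto simp: exp_neg_inv_def\<close>)
  next
    case 2
    have "((\<lambda>t. 0) has_real_derivative exp_neg_inv ([:0,0,1:] * (p - pderiv p)) t) (at t)"
      using 2 by (simp add: exp_neg_inv_def)
    then show ?thesis
      by (rule has_field_derivative_transform_within_open[of _ _ _ "{..<0}"])
        (use 2 in \<open>auto simp: exp_neg_inv_def\<close>)
  next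
    case 3
    have "((\<lambda>h. (\<lambda>s. s ^ 1 * poly p s / exp s) (inverse h)) \<longlongrightarrow> 0) (at_right 0)"
      by (rule filterlim_compose[OF tendsto_power_poly_div_exp_0 filterlim_inverse_at_top_right])
    then have right: "((\<lambda>h. exp_neg_inv p h / h) \<longlongrightarrow> 0) (at_right 0)"
      by (rule Lim_transform_eventually)
        (auto simp: exp_neg_inv_def exp_minus field_simps intro!: eventually_at_rightI[of 0 1])
    have left: "((\<lambda>h. exp_neg_inv p h / h) \<longlongrightarrow> 0) (at_left 0)"
      by (rule Lim_transform_eventually[of "\<lambda>_. 0"])
        (auto simp: exp_neg_inv_def intro!: eventually_at_leftI[of "-1" 0])
    from right left show ?thesis
      using 3 by (simp add: has_field_derivative_iff filterlim_split_at exp_neg_inv_def)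
  qed
qed

lemma smooth_real_exp_neg_inv: "smooth_real (exp_neg_inv p)"
  unfolding smooth_real_def
  by (rule exI[of _ "range exp_neg_inv"]) (auto intro: exp_neg_inv_has_derivative)

lemma exp_neg_inv_1_pos_iff: "exp_neg_inv 1 t > 0 \<longleftrightarrow> t > 0"
  and exp_neg_inv_1_nonneg: "exp_neg_inv 1 t \<ge> 0"
  by (auto simp: exp_neg_inv_def)

text \<open>A class of smooth functions on which partial derivatives can be computed symbolically,
  so that \<open>smooth_fun\<close> (all iterated partial derivatives exist) follows by induction.\<close>

inductive_set elementary_smooth :: "('a::euclidean_space \<Rightarrow> real) set" where
  const: "(\<lambda>x. c) \<in> elementary_smooth"
| inner: "(\<lambda>x. x \<bullet> w) \<in> elementary_smooth"
| add: "f \<in> elementary_smooth \<Longrightarrow> g \<in> elementary_smooth \<Longrightarrow> (\<lambda>x. f x + g x) \<in> elementary_smooth"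
| mult: "f \<in> elementary_smooth \<Longrightarrow> g \<in> elementary_smooth \<Longrightarrow> (\<lambda>x. f x * g x) \<in> elementary_smooth"
| comp: "smooth_real g \<Longrightarrow> f \<in> elementary_smooth \<Longrightarrow> (\<lambda>x. g (f x)) \<in> elementary_smooth"

lemma elementary_smooth_prod:
  "finite I \<Longrightarrow> (\<And>i. i \<in> I \<Longrightarrow> f i \<in> elementary_smooth) \<Longrightarrow>
    (\<lambda>x. \<Prod>i\<in>I. f i x) \<in> elementary_smooth"
  by (induction I rule: finite_induct) (auto intro: elementary_smooth.const elementary_smooth.mult)

lemma elementary_smooth_affine: "(\<lambda>x. x \<bullet> w + c) \<in> elementary_smooth"
  by (rule elementary_smooth.add[OF elementary_smooth.inner elementary_smooth.const])

lemma elementary_smooth_gradient: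
  assumes "f \<in> elementary_smooth"
  obtains D where "\<And>x. (f has_derivative (\<lambda>v. D x \<bullet> v)) (at x)"
    and "\<And>i. (\<lambda>x. D x \<bullet> i) \<in> elementary_smooth"
  using assms
proof (induction arbitrary: thesis)
  case (const c)
  show ?case by (rule const[of "\<lambda>x. 0"]) (auto intro: elementary_smooth.const)
next
  case (inner w)
  show ?case
    by (rule inner[of "\<lambda>x. w"]) (auto intro!: derivative_eq_intros elementary_smooth.const simp: inner_commute)
next
  case (add f g)
  obtain Df Dg where "\<And>x. (f has_derivative (\<lambda>v. Df x \<bullet> v)) (at x)" "\<And>i. (\<lambda>x. Df x \<bullet> i) \<in> elementary_smooth"
    "\<And>x. (g has_derivative (\<lambda>v. Dg x \<bullet> v)) (at x)" "\<And>i. (\<lambda>x. Dg x \<bullet> i) \<in> elementary_smooth"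
    using add.IH by metis
  then show ?case
    by (intro add.prems[of "\<lambda>x. Df x + Dg x"])
      (auto intro!: derivative_eq_intros elementary_smooth.add simp: inner_add_left)
next
  case (mult f g)
  obtain Df Dg where "\<And>x. (f has_derivative (\<lambda>v. Df x \<bullet> v)) (at x)" "\<And>i. (\<lambda>x. Df x \<bullet> i) \<in> elementary_smooth"
    "\<And>x. (g has_derivative (\<lambda>v. Dg x \<bullet> v)) (at x)" "\<And>i. (\<lambda>x. Dg x \<bullet> i) \<in> elementary_smooth"
    using mult.IH by metis
  with mult.hyps show ?case
    by (intro mult.prems[of "\<lambda>x. f x *\<^sub>R Dg x + g x *\<^sub>R Df x"])
      (auto intro!: derivative_eq_intros elementary_smooth.add elementary_smooth.mult
        simp: inner_add_left algebra_simps)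
next
  case (comp g f)
  obtain Df where Df: "\<And>x. (f has_derivative (\<lambda>v. Df x \<bullet> v)) (at x)" "\<And>i. (\<lambda>x. Df x \<bullet> i) \<in> elementary_smooth"
    using comp.IH by metis
  obtain g' where g': "smooth_real g'" "\<And>t. (g has_real_derivative g' t) (at t)"
    using smooth_real_derivative[OF comp.hyps(1)] by metis
  show ?case
  proof (rule comp.prems[of "\<lambda>x. g' (f x) *\<^sub>R Df x"])
    show "((\<lambda>x. g (f x)) has_derivative (\<lambda>v. (g' (f x) *\<^sub>R Df x) \<bullet> v)) (at x)" for x
      using has_derivative_compose[OF Df(1) g'(2)[unfolded has_field_derivative_def]]
      by (simp add: o_def algebra_simps)
    show "(\<lambda>x. (g' (f x) *\<^sub>R Df x) \<bullet> i) \<in> elementary_smooth" for i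
      using elementary_smooth.mult[OF elementary_smooth.comp[OF g'(1) comp.hyps(2)] Df(2)] by simp
  qed
qed

lemma elementary_smooth_pdir: "f \<in> elementary_smooth \<Longrightarrow> pdir i f \<in> elementary_smooth"
proof -
  assume "f \<in> elementary_smooth"
  then obtain D where D: "\<And>x. (f has_derivative (\<lambda>v. D x \<bullet> v)) (at x)"
    "\<And>i. (\<lambda>x. D x \<bullet> i) \<in> elementary_smooth"
    using elementary_smooth_gradient by blast
  have "pdir i f = (\<lambda>x. D x \<bullet> i)"
    unfolding pdir_def using D(1) frechet_derivative_at by metis
  then show ?thesis using D(2) by simp
qed

lemma elementary_smooth_differentiable: "f \<in> elementary_smooth \<Longrightarrow> f differentiable (at x)"
  by (metis elementary_smooth_gradient differentiable_def)

lemma elementary_smooth_continuous: "f \<in> elementary_smooth \<Longrightarrow> continuous_on S f"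
  by (meson continuous_at_imp_continuous_on differentiable_imp_continuous_within
      elementary_smooth_differentiable)

lemma elementary_smooth_imp_smooth_fun: "f \<in> elementary_smooth \<Longrightarrow> smooth_fun f"
proof -
  assume f: "f \<in> elementary_smooth"
  have "iter_pdir js f \<in> elementary_smooth" for js
    by (induction js) (auto simp: iter_pdir_def f elementary_smooth_pdir)
  then show ?thesis
    unfolding smooth_fun_def using elementary_smooth_differentiable by blast
qed

definition box_bump :: "'a::euclidean_space \<Rightarrow> 'a \<Rightarrow> 'a \<Rightarrow> real" where
  "box_bump c d x = (\<Prod>i\<in>Basis. exp_neg_inv 1 ((x - c) \<bullet> i) * exp_neg_inv 1 ((d - x) \<bullet> i))"

definition box_cutoff :: "nat \<Rightarrow> 'a::euclidean_space \<Rightarrow> 'a \<Rightarrow> 'a \<Rightarrow> real" where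
  "box_cutoff m c d x = 1 - exp (- (real m * box_bump c d x))"

lemma box_bump_elementary_smooth: "box_bump c d \<in> elementary_smooth"
proof -
  have "(\<lambda>x. (x - c) \<bullet> i) \<in> elementary_smooth" "(\<lambda>x. (d - x) \<bullet> i) \<in> elementary_smooth" for i
    using elementary_smooth_affine[of i "- (c \<bullet> i)"] elementary_smooth_affine[of "- i" "d \<bullet> i"]
    by (simp_all add: inner_diff_left)
  then show ?thesis
    unfolding box_bump_def
    by (intro elementary_smooth_prod elementary_smooth.mult
        elementary_smooth.comp[OF smooth_real_exp_neg_inv]) auto
qed

lemma box_bump_nonneg: "box_bump c d x \<ge> 0"
  unfolding box_bump_def
  by (intro prod_nonneg) (auto intro!: mult_nonneg_nonneg simp: exp_neg_inv_1_nonneg)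

lemma box_bump_pos_iff: "box_bump c d x > 0 \<longleftrightarrow> x \<in> box c d"
proof
  assume "x \<in> box c d"
  then show "box_bump c d x > 0" unfolding box_bump_def
    by (intro prod_pos) (auto simp: mem_box exp_neg_inv_1_pos_iff inner_diff_left)
next
  assume pos: "box_bump c d x > 0"
  have "(x - c) \<bullet> i > 0 \<and> (d - x) \<bullet> i > 0" if i: "i \<in> Basis" for i
  proof (rule ccontr)
    assume "\<not> ?thesis"
    then have "exp_neg_inv 1 ((x - c) \<bullet> i) * exp_neg_inv 1 ((d - x) \<bullet> i) = 0"
      by (auto simp: exp_neg_inv_def)
    then have "box_bump c d x = 0" unfolding box_bump_def using i by (intro prod_zero) auto
    with pos show False by simp
  qed
  then show "x \<in> box c d" by (auto simp: mem_box inner_diff_left)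
qed

lemma box_bump_eq_0_iff: "box_bump c d x = 0 \<longleftrightarrow> x \<notin> box c d"
  using box_bump_pos_iff[of c d x] box_bump_nonneg[of c d x] by linarith

lemma box_cutoff_elementary_smooth: "box_cutoff m c d \<in> elementary_smooth"
proof -
  have "(\<lambda>x. 1 + (- 1) * exp ((- real m) * box_bump c d x)) \<in> elementary_smooth"
    by (intro elementary_smooth.add elementary_smooth.mult elementary_smooth.const
        elementary_smooth.comp[OF smooth_real_exp] box_bump_elementary_smooth)
  then show ?thesis
    by (simp add: box_cutoff_def[abs_def])
qed

lemma box_cutoff_bounds: "0 \<le> box_cutoff m c d x" "box_cutoff m c d x \<le> 1"
  using box_bump_nonneg[of c d x] by (auto simp: box_cutoff_def)

lemma box_cutoff_outside: "x \<notin> box c d \<Longrightarrow> box_cutoff m c d x = 0"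
  by (simp add: box_cutoff_def box_bump_eq_0_iff)

lemma test_fun_box_cutoff:
  assumes "m > 0" "cbox c d \<subseteq> \<Omega>"
  shows "test_fun \<Omega> (box_cutoff m c d)"
proof -
  have "{x. box_cutoff m c d x \<noteq> 0} = box c d"
    using \<open>m > 0\<close> by (auto simp: box_cutoff_def box_bump_eq_0_iff)
  moreover have "closure (box c d) \<subseteq> cbox c d"
    by (rule closure_minimal[OF box_subset_cbox closed_cbox])
  ultimately show ?thesis
    unfolding test_fun_def
    using assms(2) elementary_smooth_imp_smooth_fun[OF box_cutoff_elementary_smooth]
    by (auto simp: bounded_box)
qed

lemma box_cutoff_tendsto_indicator: "(\<lambda>m. box_cutoff m c d x) \<longlonglongrightarrow> indicator (box c d) x"
proof (cases "x \<in> box c d")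
  case True
  then have "exp (- box_bump c d x) < 1"
    using box_bump_pos_iff[of c d x] by simp
  then have "(\<lambda>m. 1 - exp (- box_bump c d x) ^ m) \<longlonglongrightarrow> 1 - 0"
    by (intro tendsto_intros LIMSEQ_power_zero) simp
  moreover have "exp (- (real m * box_bump c d x)) = exp (- box_bump c d x) ^ m" for m
    by (metis exp_of_nat_mult mult_minus_right)
  ultimately show ?thesis
    using True by (simp add: box_cutoff_def)
qed (simp add: box_cutoff_outside)

text \<open>The cutoffs are test functions converging boundedly to the indicator of the box, so
  dominated convergence passes orthogonality to the limit.\<close>

lemma integral_indicator_box_eq_0:
  fixes h :: "'a::euclidean_space \<Rightarrow> real"
  assumes \<Omega>: "\<Omega> \<in> sets lebesgue"
    and hi: "integrable (lebesgue_on \<Omega>) (\<lambda>x. h x * indicator (box c d) x)"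
    and orth: "\<And>\<phi>. test_fun \<Omega> \<phi> \<Longrightarrow> (\<integral>x. h x * \<phi> x \<partial>lebesgue_on \<Omega>) = 0"
    and sub: "cbox c d \<subseteq> \<Omega>"
  shows "(\<integral>x. h x * indicator (box c d) x \<partial>lebesgue_on \<Omega>) = 0"
proof -
  define hb where "hb x = h x * indicator (box c d) x" for x
  have hb: "hb \<in> borel_measurable (lebesgue_on \<Omega>)"
    using hi unfolding hb_def by (rule borel_measurable_integrable)
  have cutoff: "box_cutoff m c d \<in> borel_measurable (lebesgue_on \<Omega>)" for m
    using \<Omega> box_cutoff_elementary_smooth
    by (intro continuous_imp_measurable_on_sets_lebesgue elementary_smooth_continuous)
  have lim: "(\<lambda>m. hb x * box_cutoff (Suc m) c d x) \<longlonglongrightarrow> hb x" for x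
  proof -
    have eq: "hb x * indicator (box c d) x = hb x"
      by (cases "x \<in> box c d") (simp_all add: hb_def)
    have "(\<lambda>m. hb x * box_cutoff (Suc m) c d x) \<longlonglongrightarrow> hb x * indicator (box c d) x"
      by (intro tendsto_mult_left LIMSEQ_Suc[OF box_cutoff_tendsto_indicator])
    then show ?thesis
      unfolding eq .
  qed
  have "(\<lambda>m. \<integral>x. hb x * box_cutoff (Suc m) c d x \<partial>lebesgue_on \<Omega>) \<longlonglongrightarrow>
      (\<integral>x. hb x \<partial>lebesgue_on \<Omega>)"
  proof (rule integral_dominated_convergence[where w="\<lambda>x. norm (hb x)"])
    show "integrable (lebesgue_on \<Omega>) (\<lambda>x. norm (hb x))"
      using hi unfolding hb_def by simp
    show "AE x in lebesgue_on \<Omega>. norm (hb x * box_cutoff (Suc m) c d x) \<le> norm (hb x)" for m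
      using box_cutoff_bounds[of "Suc m" c d] by (intro AE_I2) (simp add: abs_mult mult_left_le)
    show "(\<lambda>x. hb x * box_cutoff (Suc m) c d x) \<in> borel_measurable (lebesgue_on \<Omega>)" for m
      using hb cutoff by (rule borel_measurable_times)
    show "AE x in lebesgue_on \<Omega>. (\<lambda>m. hb x * box_cutoff (Suc m) c d x) \<longlonglongrightarrow> hb x"
      using lim by (rule AE_I2)
  qed (rule hb)
  moreover have "(\<integral>x. hb x * box_cutoff (Suc m) c d x \<partial>lebesgue_on \<Omega>) = 0" for m
  proof -
    have "(\<lambda>x. hb x * box_cutoff (Suc m) c d x) = (\<lambda>x. h x * box_cutoff (Suc m) c d x)"
      by (auto simp: hb_def box_cutoff_outside split: split_indicator)
    then show ?thesis
      using orth[OF test_fun_box_cutoff[OF _ sub]] by simp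
  qed
  ultimately show ?thesis
    by (simp add: hb_def LIMSEQ_const_iff)
qed

section \<open>Functions with vanishing integrals over boxes\<close>

lemma nn_integral_pos_part_eq_neg_part:
  fixes f :: "'b \<Rightarrow> real"
  assumes "integrable M f" "integral\<^sup>L M f = 0"
  shows "(\<integral>\<^sup>+x. ennreal (f x) \<partial>M) = (\<integral>\<^sup>+x. ennreal (- f x) \<partial>M)"
proof -
  let ?P = "\<integral>\<^sup>+x. ennreal (f x) \<partial>M" and ?N = "\<integral>\<^sup>+x. ennreal (- f x) \<partial>M"
  have fin: "?P \<noteq> \<infinity>" "?N \<noteq> \<infinity>"
    using assms(1) unfolding real_integrable_def by auto
  have "enn2real ?P - enn2real ?N = 0"
    using real_lebesgue_integral_def[OF assms(1)] assms(2) by argo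
  have "?P = ennreal (enn2real ?P)"
    using fin(1) by (simp add: ennreal_enn2real_if)
  also have "\<dots> = ennreal (enn2real ?N)"
    using \<open>enn2real ?P - enn2real ?N = 0\<close> by simp
  also have "\<dots> = ?N"
    using fin(2) by (simp add: ennreal_enn2real_if)
  finally show ?thesis .
qed

text \<open>The positive and negative parts of \<open>f\<close> define finite measures that agree on boxes,
  hence on all Borel sets.\<close>

lemma AE_lborel_eq_0_if_integral_box_eq_0:
  fixes f :: "'a::euclidean_space \<Rightarrow> real"
  assumes fi: "integrable lborel f"
    and box0: "\<And>c d. (\<integral>x. f x * indicator (box c d) x \<partial>lborel) = 0"
  shows "AE x in lborel. f x = 0"
proof -
  have fm: "f \<in> borel_measurable lborel"
    using fi by (rule borel_measurable_integrable)
  define pos where "pos = density lborel (\<lambda>x. ennreal (f x))"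
  define neg where "neg = density lborel (\<lambda>x. ennreal (- f x))"
  have pos: "emeasure pos X = (\<integral>\<^sup>+x. ennreal (f x * indicator X x) \<partial>lborel)" if "X \<in> sets borel" for X
    unfolding pos_def using that fm
    by (subst emeasure_density) (auto intro!: nn_integral_cong simp: indicator_def)
  have neg: "emeasure neg X = (\<integral>\<^sup>+x. ennreal (- (f x * indicator X x)) \<partial>lborel)" if "X \<in> sets borel" for X
    unfolding neg_def using that fm
    by (subst emeasure_density) (auto intro!: nn_integral_cong simp: indicator_def)
  have "pos = neg"
  proof (rule measure_eqI_generator_eq[where E="range (\<lambda>(a, b). box a b)" and \<Omega>=UNIV
        and A="\<lambda>n::nat. box (- (real n *\<^sub>R One)) (real n *\<^sub>R One)"])
    show "Int_stable (range (\<lambda>(a, b). box a b :: 'a set))"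
      by (auto simp: Int_stable_def box_Int_box)
    show "sets pos = sigma_sets UNIV (range (\<lambda>(a, b). box a b))"
      and "sets neg = sigma_sets UNIV (range (\<lambda>(a, b). box a b))"
      unfolding pos_def neg_def by (simp_all add: borel_eq_box)
    show "range (\<lambda>(a, b). box a b) \<subseteq> Pow (UNIV :: 'a set)"
      by simp
    show "range (\<lambda>n::nat. box (- (real n *\<^sub>R One)) (real n *\<^sub>R One)) \<subseteq> range (\<lambda>(a, b). box a b :: 'a set)"
      by auto
    show "(\<Union>n::nat. box (- (real n *\<^sub>R One)) (real n *\<^sub>R One)) = (UNIV :: 'a set)"
      by (rule UN_box_eq_UNIV)
    fix X :: "'a set"
    assume "X \<in> range (\<lambda>(a, b). box a b)"
    then obtain c d where X: "X = box c d" by auto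
    have "integrable lborel (\<lambda>x. f x * indicator X x)"
      using integrable_mult_indicator[of X lborel f] fi X by (simp add: mult.commute)
    with box0[of c d] X show "emeasure pos X = emeasure neg X"
      using nn_integral_pos_part_eq_neg_part[of lborel "\<lambda>x. f x * indicator X x"] pos neg by simp
  next
    fix n :: nat
    have "emeasure pos (box (- (real n *\<^sub>R One)) (real n *\<^sub>R One)) \<le> (\<integral>\<^sup>+x. ennreal (norm (f x)) \<partial>lborel)"
      by (subst pos) (auto intro!: nn_integral_mono simp: indicator_def)
    also have "\<dots> < \<infinity>"
      using fi by (simp add: integrable_iff_bounded)
    finally show "emeasure pos (box (- (real n *\<^sub>R One)) (real n *\<^sub>R One)) \<noteq> \<infinity>"
      by simp
  qed
  then have "AE x in lborel. ennreal (f x) = ennreal (- f x)"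
    unfolding pos_def neg_def using fm by (subst (asm) sigma_finite_measure.density_unique_iff[OF sigma_finite_lborel]) auto
  then show ?thesis
  proof eventually_elim
    case (elim x)
    then show "f x = 0"
      by (cases "f x \<ge> 0") (auto simp: ennreal_neg)
  qed
qed

lemma sets_lebesgue_open: "open S \<Longrightarrow> S \<in> sets lebesgue"
  by (metis borel_open sets_completionI_sets sets_lborel)

lemma AE_lebesgue_eq_0_if_integral_box_eq_0:
  fixes f :: "'a::euclidean_space \<Rightarrow> real"
  assumes fi: "integrable lebesgue f"
    and box0: "\<And>c d. (\<integral>x. f x * indicator (box c d) x \<partial>lebesgue) = 0"
  shows "AE x in lebesgue. f x = 0"
proof -
  obtain g where gm: "g \<in> borel_measurable lborel" and fg: "AE x in lborel. f x = g x"
    using completion_ex_borel_measurable_real[OF borel_measurable_integrable[OF fi]] by blast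
  have fg': "AE x in lebesgue. f x = g x"
    using fg by (rule AE_completion)
  have gm': "g \<in> borel_measurable lebesgue"
    using gm by (rule measurable_completion)
  have "integrable lebesgue g"
    using integrable_cong_AE[OF borel_measurable_integrable[OF fi] gm' fg'] fi by simp
  then have gi: "integrable lborel g"
    using integrable_completion[OF gm] by simp
  have "(\<integral>x. g x * indicator (box c d) x \<partial>lborel) = 0" for c d
  proof -
    have gbm: "(\<lambda>x. g x * indicator (box c d) x) \<in> borel_measurable lborel"
      using gm by simp
    have "(\<integral>x. g x * indicator (box c d) x \<partial>lborel) = (\<integral>x. g x * indicator (box c d) x \<partial>lebesgue)"
      by (rule integral_completion[OF gbm, symmetric])
    also have "\<dots> = (\<integral>x. f x * indicator (box c d) x \<partial>lebesgue)"
      by (rule integral_cong_AE)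
        (use fg' measurable_completion[OF gbm] in \<open>auto elim: eventually_mono intro!: borel_measurable_times
          borel_measurable_integrable[OF fi] borel_measurable_indicator sets_lebesgue_open\<close>)
    finally show ?thesis
      using box0 by simp
  qed
  with gi have "AE x in lborel. g x = 0"
    by (rule AE_lborel_eq_0_if_integral_box_eq_0)
  then have "AE x in lebesgue. g x = 0"
    by (rule AE_completion)
  with fg' show ?thesis
    by eventually_elim simp
qed

lemma box_Int_box_subbox:
  fixes a :: "'a::euclidean_space"
  obtains p q where "box a b \<inter> box c d = box p q" "cbox p q \<subseteq> cbox a b"
proof
  show "box a b \<inter> box c d =
      box (\<Sum>i\<in>Basis. max (a\<bullet>i) (c\<bullet>i) *\<^sub>R i) (\<Sum>i\<in>Basis. min (b\<bullet>i) (d\<bullet>i) *\<^sub>R i)"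
    by (rule box_Int_box)
  show "cbox (\<Sum>i\<in>Basis. max (a\<bullet>i) (c\<bullet>i) *\<^sub>R i) (\<Sum>i\<in>Basis. min (b\<bullet>i) (d\<bullet>i) *\<^sub>R i) \<subseteq> cbox a b"
    by (auto simp: mem_box)
qed

lemma AE_eq_0_if_integral_box_eq_0:
  fixes h :: "'a::euclidean_space \<Rightarrow> real"
  assumes \<Omega>: "open \<Omega>"
    and hi: "\<And>c d. cbox c d \<subseteq> \<Omega> \<Longrightarrow> integrable (lebesgue_on \<Omega>) (\<lambda>x. h x * indicator (box c d) x)"
    and box0: "\<And>c d. cbox c d \<subseteq> \<Omega> \<Longrightarrow> (\<integral>x. h x * indicator (box c d) x \<partial>lebesgue_on \<Omega>) = 0"
  shows "AE x in lebesgue_on \<Omega>. h x = 0"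
proof -
  have \<Omega>s: "\<Omega> \<in> sets lebesgue"
    using \<Omega> by (rule sets_lebesgue_open)
  have on_box: "AE x in lebesgue. x \<in> \<Omega> \<inter> box a b \<longrightarrow> h x = 0" if ab: "cbox a b \<subseteq> \<Omega>" for a b
  proof -
    define F where "F x = indicator \<Omega> x * (h x * indicator (box a b) x)" for x
    have "integrable lebesgue F"
      using hi[OF ab] \<Omega>s by (simp add: integrable_restrict_space F_def[abs_def])
    moreover have "(\<integral>x. F x * indicator (box c d) x \<partial>lebesgue) = 0" for c d
    proof -
      obtain p q where pq: "box a b \<inter> box c d = box p q" "cbox p q \<subseteq> cbox a b"
        by (rule box_Int_box_subbox)
      have "(\<lambda>x. F x * indicator (box c d) x) = (\<lambda>x. indicator \<Omega> x * (h x * indicator (box p q) x))"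
        by (auto simp: F_def fun_eq_iff pq(1)[symmetric] split: split_indicator)
      then have "(\<integral>x. F x * indicator (box c d) x \<partial>lebesgue) = (\<integral>x. h x * indicator (box p q) x \<partial>lebesgue_on \<Omega>)"
        using integral_restrict_space[of \<Omega> lebesgue "\<lambda>x. h x * indicator (box p q) x"] \<Omega>s by simp
      also have "\<dots> = 0"
        using box0 pq(2) ab by blast
      finally show ?thesis .
    qed
    ultimately have "AE x in lebesgue. F x = 0"
      by (rule AE_lebesgue_eq_0_if_integral_box_eq_0)
    then show ?thesis
      by eventually_elim (auto simp: F_def indicator_def)
  qed
  have on_cbox: "AE x in lebesgue. x \<in> cbox a b \<longrightarrow> h x = 0" if ab: "cbox a b \<subseteq> \<Omega>" for a b
  proof -
    have "AE x in lebesgue. x \<notin> cbox a b - box a b"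
      by (rule AE_completion[OF AE_not_in[OF null_sets_cbox_Diff_box]])
    with on_box[OF ab] show ?thesis
      by eventually_elim (use ab in auto)
  qed
  obtain \<D> where \<D>: "countable \<D>" "\<And>X. X \<in> \<D> \<Longrightarrow> \<exists>a b. X = cbox a b \<and> X \<subseteq> \<Omega>" "\<Union>\<D> = \<Omega>"
    using open_countable_Union_open_cbox[OF \<Omega>] by (metis Pow_iff subsetD)
  have "AE x in lebesgue. \<forall>X\<in>\<D>. x \<in> X \<longrightarrow> h x = 0"
    using \<D>(2) on_cbox by (subst AE_ball_countable[OF \<D>(1)]) blast
  then have "AE x in lebesgue. x \<in> \<Omega> \<longrightarrow> h x = 0"
    by eventually_elim (use \<D>(3) in blast)
  then show ?thesis
    using AE_restrict_space_iff[of \<Omega> lebesgue] \<Omega>s by simp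
qed

section \<open>Cauchy-Schwarz and Minkowski inequalities in L2\<close>

text \<open>With \<open>a = sqrt A\<close>, \<open>b = sqrt B\<close>, the optimal \<open>t = b / a\<close> may degenerate; the choice
  \<open>t = (b + d) / (a + d)\<close> gives \<open>C \<le> a * b + d * (a + b) / 2\<close> for every \<open>d > 0\<close>.\<close>

lemma le_sqrt_mult_sqrt_if_scaled_bound:
  fixes A B C :: real
  assumes A: "A \<ge> 0" and B: "B \<ge> 0" and bound: "\<And>t. t > 0 \<Longrightarrow> 2 * C \<le> t * A + B / t"
  shows "C \<le> sqrt A * sqrt B"
proof (rule field_le_epsilon)
  fix e :: real assume e: "e > 0"
  define a b where "a = sqrt A" and "b = sqrt B"
  have a: "a \<ge> 0" "A = a\<^sup>2" and b: "b \<ge> 0" "B = b\<^sup>2"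
    using A B by (simp_all add: a_def b_def)
  define d where "d = e / (a + b + 1)"
  have d: "d > 0" "d * (a + b) \<le> e"
    using a b e by (auto simp: d_def field_simps)
  have "(b + d) / (a + d) * A \<le> (b + d) * a"
    using a b d by (simp add: field_simps power2_eq_square mult_left_mono)
  moreover have "B / ((b + d) / (a + d)) \<le> b * (a + d)"
    using a b d by (simp add: field_simps power2_eq_square mult_left_mono)
  ultimately have "2 * C \<le> (b + d) * a + b * (a + d)"
    using bound[of "(b + d) / (a + d)"] a b d by (smt (verit) divide_pos_pos)
  with d(2) e show "C \<le> sqrt A * sqrt B + e"
    unfolding a_def[symmetric] b_def[symmetric] by (simp add: algebra_simps)
qed

lemma inner_le_scaled_norms:
  fixes x y :: "'a::real_inner"
  assumes t: "t > 0"
  shows "2 * (x \<bullet> y) \<le> t * (norm x)\<^sup>2 + (norm y)\<^sup>2 / t"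
proof -
  have "0 \<le> (norm (t *\<^sub>R x - y))\<^sup>2 / t"
    using t by simp
  also have "\<dots> = t * (norm x)\<^sup>2 - 2 * (x \<bullet> y) + (norm y)\<^sup>2 / t"
    using t unfolding power2_norm_eq_inner
    by (simp add: inner_diff_left inner_diff_right inner_commute field_simps power2_eq_square)
  finally show ?thesis
    by simp
qed

lemma
  fixes f g :: "'b \<Rightarrow> 'c::euclidean_space"
  assumes fm: "f \<in> borel_measurable M" and gm: "g \<in> borel_measurable M"
    and fi: "integrable M (\<lambda>x. (norm (f x))\<^sup>2)" and gi: "integrable M (\<lambda>x. (norm (g x))\<^sup>2)"
  shows integrable_inner_if_square_integrable: "integrable M (\<lambda>x. f x \<bullet> g x)"
    and integral_inner_le_sqrt_mult_sqrt:
      "(\<integral>x. f x \<bullet> g x \<partial>M) \<le> sqrt (\<integral>x. (norm (f x))\<^sup>2 \<partial>M) * sqrt (\<integral>x. (norm (g x))\<^sup>2 \<partial>M)"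
proof -
  have "\<bar>f x \<bullet> g x\<bar> \<le> (norm (f x))\<^sup>2 + (norm (g x))\<^sup>2" for x
    using Cauchy_Schwarz_ineq2[of "f x" "g x"]
      inner_le_scaled_norms[of 1 "norm (f x)" "norm (g x)"] by simp
  then show fgi: "integrable M (\<lambda>x. f x \<bullet> g x)"
    using fm gm by (intro Bochner_Integration.integrable_bound[OF Bochner_Integration.integrable_add[OF fi gi]])
      (auto intro!: AE_I2)
  show "(\<integral>x. f x \<bullet> g x \<partial>M) \<le> sqrt (\<integral>x. (norm (f x))\<^sup>2 \<partial>M) * sqrt (\<integral>x. (norm (g x))\<^sup>2 \<partial>M)"
  proof (rule le_sqrt_mult_sqrt_if_scaled_bound)
    fix t :: real assume "t > 0"
    then have "(\<integral>x. 2 * (f x \<bullet> g x) \<partial>M) \<le> (\<integral>x. t * (norm (f x))\<^sup>2 + (norm (g x))\<^sup>2 / t \<partial>M)"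
      using fi gi fgi inner_le_scaled_norms by (intro integral_mono) auto
    with fi gi show "2 * (\<integral>x. f x \<bullet> g x \<partial>M) \<le> t * (\<integral>x. (norm (f x))\<^sup>2 \<partial>M) + (\<integral>x. (norm (g x))\<^sup>2 \<partial>M) / t"
      by simp
  qed simp_all
qed

lemma
  fixes f g :: "'b \<Rightarrow> 'c::euclidean_space"
  assumes fm: "f \<in> borel_measurable M" and gm: "g \<in> borel_measurable M"
    and fi: "integrable M (\<lambda>x. (norm (f x))\<^sup>2)" and gi: "integrable M (\<lambda>x. (norm (g x))\<^sup>2)"
  shows integrable_norm_add_square: "integrable M (\<lambda>x. (norm (f x + g x))\<^sup>2)"
    and Minkowski_L2: "sqrt (\<integral>x. (norm (f x + g x))\<^sup>2 \<partial>M) \<le>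
      sqrt (\<integral>x. (norm (f x))\<^sup>2 \<partial>M) + sqrt (\<integral>x. (norm (g x))\<^sup>2 \<partial>M)"
proof -
  have expand: "(norm (f x + g x))\<^sup>2 = (norm (f x))\<^sup>2 + 2 * (f x \<bullet> g x) + (norm (g x))\<^sup>2" for x
    by (simp add: power2_norm_eq_inner inner_add_left inner_add_right inner_commute)
  note fgi = integrable_inner_if_square_integrable[OF assms]
  show "integrable M (\<lambda>x. (norm (f x + g x))\<^sup>2)"
    unfolding expand using fi gi fgi by simp
  have "(\<integral>x. (norm (f x + g x))\<^sup>2 \<partial>M) =
      (\<integral>x. (norm (f x))\<^sup>2 \<partial>M) + 2 * (\<integral>x. f x \<bullet> g x \<partial>M) + (\<integral>x. (norm (g x))\<^sup>2 \<partial>M)"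
    unfolding expand using fi gi fgi by simp
  also have "\<dots> \<le> (sqrt (\<integral>x. (norm (f x))\<^sup>2 \<partial>M) + sqrt (\<integral>x. (norm (g x))\<^sup>2 \<partial>M))\<^sup>2"
    using integral_inner_le_sqrt_mult_sqrt[OF assms] by (simp add: power2_sum)
  finally show "sqrt (\<integral>x. (norm (f x + g x))\<^sup>2 \<partial>M) \<le>
      sqrt (\<integral>x. (norm (f x))\<^sup>2 \<partial>M) + sqrt (\<integral>x. (norm (g x))\<^sup>2 \<partial>M)"
    by (simp add: real_le_lsqrt)
qed

lemma integrable_mult_indicator_if_square_integrable:
  fixes f :: "'b \<Rightarrow> real"
  assumes fm: "f \<in> borel_measurable M" and fi: "integrable M (\<lambda>x. (f x)\<^sup>2)"
    and A: "A \<in> sets M" "emeasure M A < \<infinity>"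
  shows "integrable M (\<lambda>x. f x * indicator A x)"
proof (rule Bochner_Integration.integrable_bound)
  show "integrable M (\<lambda>x. (f x)\<^sup>2 + indicator A x)"
    using fi A by (intro Bochner_Integration.integrable_add) auto
  have "\<bar>f x\<bar> \<le> (f x)\<^sup>2 + 1" for x
  proof (cases "\<bar>f x\<bar> \<le> 1")
    case False
    then have "\<bar>f x\<bar> * 1 \<le> \<bar>f x\<bar> * \<bar>f x\<bar>"
      by (intro mult_left_mono) auto
    then show ?thesis
      by (simp add: power2_eq_square abs_mult_self_eq)
  qed (use zero_le_power2[of "f x"] in linarith)
  then show "AE x in M. norm (f x * indicator A x) \<le> norm ((f x)\<^sup>2 + indicator A x)"
    by (intro AE_I2) (auto split: split_indicator)
qed (use fm A in auto)

section \<open>Weak gradients and the H1 norm\<close>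

definition L2_norm :: "'a::euclidean_space set \<Rightarrow> ('a \<Rightarrow> 'b::real_normed_vector) \<Rightarrow> real" where
  "L2_norm \<Omega> f = sqrt (\<integral>x. (norm (f x))\<^sup>2 \<partial>lebesgue_on \<Omega>)"

lemma L2_norm_nonneg: "L2_norm \<Omega> f \<ge> 0"
  by (simp add: L2_norm_def)

lemma H1_norm_eq_norm_L2_norms:
  "H1_norm \<Omega> u = norm (L2_norm \<Omega> u, L2_norm \<Omega> (wgrad \<Omega> u))"
  by (simp add: H1_norm_def L2_norm_def norm_Pair)

lemma L2_norm_add_le:
  fixes f g :: "'a::euclidean_space \<Rightarrow> 'b::euclidean_space"
  assumes "f \<in> borel_measurable (lebesgue_on \<Omega>)" "g \<in> borel_measurable (lebesgue_on \<Omega>)"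
    "integrable (lebesgue_on \<Omega>) (\<lambda>x. (norm (f x))\<^sup>2)" "integrable (lebesgue_on \<Omega>) (\<lambda>x. (norm (g x))\<^sup>2)"
  shows "L2_norm \<Omega> (\<lambda>x. f x + g x) \<le> L2_norm \<Omega> f + L2_norm \<Omega> g"
  using Minkowski_L2[OF assms] by (simp add: L2_norm_def)

lemma L2_fun_lincomb:
  assumes "L2_fun \<Omega> u" "L2_fun \<Omega> w"
  shows "L2_fun \<Omega> (\<lambda>x. a * u x + b * w x)"
proof -
  have "(\<lambda>x. a * u x) \<in> borel_measurable (lebesgue_on \<Omega>)" "(\<lambda>x. b * w x) \<in> borel_measurable (lebesgue_on \<Omega>)"
    using assms by (auto simp: L2_fun_def intro: borel_measurable_times)
  with assms show ?thesis
    using integrable_norm_add_square[of "\<lambda>x. a * u x" "lebesgue_on \<Omega>" "\<lambda>x. b * w x"]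
    by (simp add: L2_fun_def power_mult_distrib)
qed

lemma L2_vec_lincomb:
  assumes "L2_vec \<Omega> g" "L2_vec \<Omega> h"
  shows "L2_vec \<Omega> (\<lambda>x. a *\<^sub>R g x + b *\<^sub>R h x)"
proof -
  have "(\<lambda>x. a *\<^sub>R g x) \<in> borel_measurable (lebesgue_on \<Omega>)" "(\<lambda>x. b *\<^sub>R h x) \<in> borel_measurable (lebesgue_on \<Omega>)"
    using assms by (auto simp: L2_vec_def intro: borel_measurable_scaleR)
  with assms show ?thesis
    using integrable_norm_add_square[of "\<lambda>x. a *\<^sub>R g x" "lebesgue_on \<Omega>" "\<lambda>x. b *\<^sub>R h x"]
    by (simp add: L2_vec_def power_mult_distrib)
qed

lemma weak_grad_lincomb:
  assumes "weak_grad \<Omega> u g" "weak_grad \<Omega> w h"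
  shows "weak_grad \<Omega> (\<lambda>x. a * u x + b * w x) (\<lambda>x. a *\<^sub>R g x + b *\<^sub>R h x)"
  unfolding weak_grad_def
proof (intro allI impI ballI conjI)
  fix \<phi> :: "'a \<Rightarrow> real" and i :: 'a
  assume "test_fun \<Omega> \<phi>" "i \<in> Basis"
  with assms have u: "integrable (lebesgue_on \<Omega>) (\<lambda>x. u x * pdir i \<phi> x)"
      "integrable (lebesgue_on \<Omega>) (\<lambda>x. (g x \<bullet> i) * \<phi> x)"
      "(\<integral>x. u x * pdir i \<phi> x \<partial>lebesgue_on \<Omega>) = - (\<integral>x. (g x \<bullet> i) * \<phi> x \<partial>lebesgue_on \<Omega>)"
    and w: "integrable (lebesgue_on \<Omega>) (\<lambda>x. w x * pdir i \<phi> x)"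
      "integrable (lebesgue_on \<Omega>) (\<lambda>x. (h x \<bullet> i) * \<phi> x)"
      "(\<integral>x. w x * pdir i \<phi> x \<partial>lebesgue_on \<Omega>) = - (\<integral>x. (h x \<bullet> i) * \<phi> x \<partial>lebesgue_on \<Omega>)"
    unfolding weak_grad_def by blast+
  have lhs: "(\<lambda>x. (a * u x + b * w x) * pdir i \<phi> x) = (\<lambda>x. a * (u x * pdir i \<phi> x) + b * (w x * pdir i \<phi> x))"
    and rhs: "(\<lambda>x. ((a *\<^sub>R g x + b *\<^sub>R h x) \<bullet> i) * \<phi> x) = (\<lambda>x. a * ((g x \<bullet> i) * \<phi> x) + b * ((h x \<bullet> i) * \<phi> x))"
    by (simp_all add: algebra_simps inner_add_left)
  show "integrable (lebesgue_on \<Omega>) (\<lambda>x. (a * u x + b * w x) * pdir i \<phi> x)"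
    and "integrable (lebesgue_on \<Omega>) (\<lambda>x. ((a *\<^sub>R g x + b *\<^sub>R h x) \<bullet> i) * \<phi> x)"
    unfolding lhs rhs using u w by simp_all
  have "(\<integral>x. (a * u x + b * w x) * pdir i \<phi> x \<partial>lebesgue_on \<Omega>) =
      a * (\<integral>x. u x * pdir i \<phi> x \<partial>lebesgue_on \<Omega>) + b * (\<integral>x. w x * pdir i \<phi> x \<partial>lebesgue_on \<Omega>)"
    using u(1) w(1) by (simp add: lhs)
  also have "\<dots> = - (a * (\<integral>x. (g x \<bullet> i) * \<phi> x \<partial>lebesgue_on \<Omega>) + b * (\<integral>x. (h x \<bullet> i) * \<phi> x \<partial>lebesgue_on \<Omega>))"
    unfolding u(3) w(3) by simp
  also have "\<dots> = - (\<integral>x. ((a *\<^sub>R g x + b *\<^sub>R h x) \<bullet> i) * \<phi> x \<partial>lebesgue_on \<Omega>)"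
    using u(2) w(2) by (simp add: rhs)
  finally show "(\<integral>x. (a * u x + b * w x) * pdir i \<phi> x \<partial>lebesgue_on \<Omega>) =
      - (\<integral>x. ((a *\<^sub>R g x + b *\<^sub>R h x) \<bullet> i) * \<phi> x \<partial>lebesgue_on \<Omega>)" .
qed

lemma H1_lincomb:
  assumes "u \<in> H1 \<Omega>" "w \<in> H1 \<Omega>"
  shows "(\<lambda>x. a * u x + b * w x) \<in> H1 \<Omega>"
proof -
  obtain gu gw where "L2_vec \<Omega> gu" "weak_grad \<Omega> u gu" "L2_vec \<Omega> gw" "weak_grad \<Omega> w gw"
    using assms unfolding H1_def by blast
  with assms show ?thesis
    unfolding H1_def
    using L2_fun_lincomb[of \<Omega> u w a b] L2_vec_lincomb[of \<Omega> gu gw a b] weak_grad_lincomb[of \<Omega> u gu w gw a b]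
    by blast
qed

lemma H1_diff: "u \<in> H1 \<Omega> \<Longrightarrow> w \<in> H1 \<Omega> \<Longrightarrow> (\<lambda>x. u x - w x) \<in> H1 \<Omega>"
  using H1_lincomb[of u \<Omega> w 1 "- 1"] by simp

lemma L2_fun_inner_Basis:
  assumes "L2_vec \<Omega> g" "i \<in> Basis"
  shows "L2_fun \<Omega> (\<lambda>x. g x \<bullet> i)"
  unfolding L2_fun_def
proof
  show gm: "(\<lambda>x. g x \<bullet> i) \<in> borel_measurable (lebesgue_on \<Omega>)"
    using assms(1) unfolding L2_vec_def by (auto intro: borel_measurable_inner)
  have bound: "(g x \<bullet> i)\<^sup>2 \<le> (norm (g x))\<^sup>2" for x
    using Basis_le_norm[OF assms(2), of "g x"] power2_le_iff_abs_le[OF norm_ge_zero, of "g x \<bullet> i" "g x"]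
    by blast
  show "integrable (lebesgue_on \<Omega>) (\<lambda>x. (g x \<bullet> i)\<^sup>2)"
  proof (rule Bochner_Integration.integrable_bound[of _ "\<lambda>x. (norm (g x))\<^sup>2"])
    show "integrable (lebesgue_on \<Omega>) (\<lambda>x. (norm (g x))\<^sup>2)"
      using assms(1) unfolding L2_vec_def by blast
  qed (use gm bound in auto)
qed

lemma lebesgue_on_box_finite:
  assumes "\<Omega> \<in> sets lebesgue" "box c d \<subseteq> \<Omega>"
  shows "box c d \<in> sets (lebesgue_on \<Omega>)" "emeasure (lebesgue_on \<Omega>) (box c d) < \<infinity>"
  using assms emeasure_lborel_box_finite[of c d]
  by (simp_all add: sets_restrict_space_iff emeasure_restrict_space sets_lebesgue_open)

lemma integral_weak_grad_diff_eq_0: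
  assumes g: "weak_grad \<Omega> u g" and h: "weak_grad \<Omega> u h" and \<phi>: "test_fun \<Omega> \<phi>" and i: "i \<in> Basis"
  shows "(\<integral>x. (g x - h x) \<bullet> i * \<phi> x \<partial>lebesgue_on \<Omega>) = 0"
proof -
  from g \<phi> i have g\<phi>: "integrable (lebesgue_on \<Omega>) (\<lambda>x. (g x \<bullet> i) * \<phi> x)"
    "(\<integral>x. u x * pdir i \<phi> x \<partial>lebesgue_on \<Omega>) = - (\<integral>x. (g x \<bullet> i) * \<phi> x \<partial>lebesgue_on \<Omega>)"
    unfolding weak_grad_def by blast+
  from h \<phi> i have h\<phi>: "integrable (lebesgue_on \<Omega>) (\<lambda>x. (h x \<bullet> i) * \<phi> x)"
    "(\<integral>x. u x * pdir i \<phi> x \<partial>lebesgue_on \<Omega>) = - (\<integral>x. (h x \<bullet> i) * \<phi> x \<partial>lebesgue_on \<Omega>)"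
    unfolding weak_grad_def by blast+
  have "(\<integral>x. (g x - h x) \<bullet> i * \<phi> x \<partial>lebesgue_on \<Omega>) =
      (\<integral>x. (g x \<bullet> i) * \<phi> x \<partial>lebesgue_on \<Omega>) - (\<integral>x. (h x \<bullet> i) * \<phi> x \<partial>lebesgue_on \<Omega>)"
    using g\<phi>(1) h\<phi>(1) by (simp add: inner_diff_left left_diff_distrib)
  also have "\<dots> = 0"
    using g\<phi>(2) h\<phi>(2) by simp
  finally show ?thesis .
qed

lemma weak_grad_unique:
  assumes \<Omega>: "open \<Omega>"
    and g: "L2_vec \<Omega> g" "weak_grad \<Omega> u g" and h: "L2_vec \<Omega> h" "weak_grad \<Omega> u h"
  shows "AE x in lebesgue_on \<Omega>. g x = h x"
proof -
  have \<Omega>s: "\<Omega> \<in> sets lebesgue"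
    using \<Omega> by (rule sets_lebesgue_open)
  have "AE x in lebesgue_on \<Omega>. (g x - h x) \<bullet> i = 0" if i: "i \<in> Basis" for i
  proof -
    have "L2_fun \<Omega> (\<lambda>x. (g x - h x) \<bullet> i)"
      using L2_fun_inner_Basis[OF L2_vec_lincomb[OF g(1) h(1), of 1 "- 1"] i] by simp
    then have loc: "integrable (lebesgue_on \<Omega>) (\<lambda>x. (g x - h x) \<bullet> i * indicator (box c d) x)"
      if "cbox c d \<subseteq> \<Omega>" for c d
    proof -
      from that have "box c d \<subseteq> \<Omega>"
        using box_subset_cbox by blast
      with \<open>L2_fun \<Omega> (\<lambda>x. (g x - h x) \<bullet> i)\<close> show ?thesis
        unfolding L2_fun_def
        using integrable_mult_indicator_if_square_integrable lebesgue_on_box_finite[OF \<Omega>s]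
        by blast
    qed
    show ?thesis
      using \<Omega> loc integral_indicator_box_eq_0[OF \<Omega>s loc integral_weak_grad_diff_eq_0[OF g(2) h(2) _ i]]
      by (rule AE_eq_0_if_integral_box_eq_0)
  qed
  then have "AE x in lebesgue_on \<Omega>. \<forall>i\<in>Basis. (g x - h x) \<bullet> i = 0"
    by (intro AE_finite_allI) auto
  then show ?thesis
    by eventually_elim (metis euclidean_eqI inner_zero_left eq_iff_diff_eq_0)
qed

lemma L2_norm_wgrad_eq:
  assumes \<Omega>: "open \<Omega>" and g: "L2_vec \<Omega> g" "weak_grad \<Omega> u g"
  shows "L2_norm \<Omega> (wgrad \<Omega> u) = L2_norm \<Omega> g"
proof -
  have "\<exists>g. L2_vec \<Omega> g \<and> weak_grad \<Omega> u g"
    using g by blast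
  then have "L2_vec \<Omega> (wgrad \<Omega> u) \<and> weak_grad \<Omega> u (wgrad \<Omega> u)"
    unfolding wgrad_def by (rule someI_ex)
  then have w: "L2_vec \<Omega> (wgrad \<Omega> u)" "weak_grad \<Omega> u (wgrad \<Omega> u)"
    by blast+
  have "AE x in lebesgue_on \<Omega>. wgrad \<Omega> u x = g x"
    using weak_grad_unique[OF \<Omega> w(1) w(2) g(1) g(2)] .
  then have "(\<integral>x. (norm (wgrad \<Omega> u x))\<^sup>2 \<partial>lebesgue_on \<Omega>) = (\<integral>x. (norm (g x))\<^sup>2 \<partial>lebesgue_on \<Omega>)"
    using w(1) g(1) unfolding L2_vec_def
    by (intro integral_cong_AE) (auto elim: eventually_mono)
  then show ?thesis
    by (simp add: L2_norm_def)
qed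

lemma norm_Pair_mono:
  fixes a b c d :: real
  assumes "0 \<le> a" "a \<le> c" "0 \<le> b" "b \<le> d"
  shows "norm (a, b) \<le> norm (c, d)"
  using assms by (simp add: norm_Pair power_mono add_mono)

lemma L2_norm_wgrad_add_le:
  assumes \<Omega>: "open \<Omega>" and u: "u \<in> H1 \<Omega>" and w: "L2_fun \<Omega> w"
  shows "L2_norm \<Omega> (wgrad \<Omega> (\<lambda>x. u x + w x)) \<le> L2_norm \<Omega> (wgrad \<Omega> u) + L2_norm \<Omega> (wgrad \<Omega> w)"
proof (cases "w \<in> H1 \<Omega>")
  case True
  obtain gu gw where gu: "L2_vec \<Omega> gu" "weak_grad \<Omega> u gu" and gw: "L2_vec \<Omega> gw" "weak_grad \<Omega> w gw"
    using u True unfolding H1_def by blast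
  have "L2_norm \<Omega> (wgrad \<Omega> (\<lambda>x. u x + w x)) = L2_norm \<Omega> (\<lambda>x. gu x + gw x)"
    using L2_norm_wgrad_eq[OF \<Omega> L2_vec_lincomb[OF gu(1) gw(1)] weak_grad_lincomb[OF gu(2) gw(2)], of 1 1]
    by simp
  also have "\<dots> \<le> L2_norm \<Omega> gu + L2_norm \<Omega> gw"
    using gu(1) gw(1) unfolding L2_vec_def by (intro L2_norm_add_le) auto
  also have "\<dots> = L2_norm \<Omega> (wgrad \<Omega> u) + L2_norm \<Omega> (wgrad \<Omega> w)"
    using L2_norm_wgrad_eq[OF \<Omega> gu] L2_norm_wgrad_eq[OF \<Omega> gw] by simp
  finally show ?thesis .
next
  case False
  txt \<open>Then \<open>u + w \<notin> H1\<close> as well, and \<open>wgrad\<close> returns the same junk value for both.\<close>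
  have "(\<lambda>x. u x + w x) \<notin> H1 \<Omega>"
    using H1_diff[of "\<lambda>x. u x + w x" \<Omega> u] u False by auto
  moreover have "L2_fun \<Omega> (\<lambda>x. u x + w x)"
    using L2_fun_lincomb[of \<Omega> u w 1 1] u w unfolding H1_def by simp
  ultimately have "(\<lambda>g. L2_vec \<Omega> g \<and> weak_grad \<Omega> (\<lambda>x. u x + w x) g) =
      (\<lambda>g. L2_vec \<Omega> g \<and> weak_grad \<Omega> w g)"
    using False w unfolding H1_def by auto
  then have "wgrad \<Omega> (\<lambda>x. u x + w x) = wgrad \<Omega> w"
    unfolding wgrad_def by simp
  then show ?thesis
    using L2_norm_nonneg by simp
qed

lemma H1_norm_triangle:
  assumes \<Omega>: "open \<Omega>" and u: "u \<in> H1 \<Omega>" and w: "L2_fun \<Omega> w"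
  shows "H1_norm \<Omega> (\<lambda>x. u x + w x) \<le> H1_norm \<Omega> u + H1_norm \<Omega> w"
proof -
  have "L2_norm \<Omega> (\<lambda>x. u x + w x) \<le> L2_norm \<Omega> u + L2_norm \<Omega> w"
    using u w unfolding H1_def L2_fun_def by (intro L2_norm_add_le) auto
  with L2_norm_wgrad_add_le[OF assms]
  have "H1_norm \<Omega> (\<lambda>x. u x + w x) \<le>
      norm (L2_norm \<Omega> u + L2_norm \<Omega> w, L2_norm \<Omega> (wgrad \<Omega> u) + L2_norm \<Omega> (wgrad \<Omega> w))"
    unfolding H1_norm_eq_norm_L2_norms by (intro norm_Pair_mono) (simp_all add: L2_norm_nonneg)
  also have "\<dots> = norm ((L2_norm \<Omega> u, L2_norm \<Omega> (wgrad \<Omega> u)) + (L2_norm \<Omega> w, L2_norm \<Omega> (wgrad \<Omega> w)))"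
    by simp
  also have "\<dots> \<le> H1_norm \<Omega> u + H1_norm \<Omega> w"
    unfolding H1_norm_eq_norm_L2_norms by (rule norm_triangle_ineq)
  finally show ?thesis .
qed

section \<open>Shallow ReLU networks\<close>

lemma finite_measure_lebesgue_on:
  assumes "\<Omega> \<in> sets lebesgue" "bounded \<Omega>"
  shows "finite_measure (lebesgue_on \<Omega>)"
proof
  have "emeasure lebesgue \<Omega> \<noteq> top"
    using bounded_set_imp_lmeasurable[OF assms(2,1)] by (rule fmeasurableD2)
  then show "emeasure (lebesgue_on \<Omega>) (space (lebesgue_on \<Omega>)) \<noteq> \<infinity>"
    using assms(1) by (simp add: emeasure_restrict_space space_restrict_space)
qed

lemma L2_fun_continuous_on_closure:
  assumes \<Omega>: "\<Omega> \<in> sets lebesgue" "bounded \<Omega>" and f: "continuous_on (closure \<Omega>) f"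
  shows "L2_fun \<Omega> f"
proof -
  interpret finite_measure "lebesgue_on \<Omega>"
    using \<Omega> by (rule finite_measure_lebesgue_on)
  have fm: "f \<in> borel_measurable (lebesgue_on \<Omega>)"
    using continuous_on_subset[OF f closure_subset] \<Omega>(1)
    by (rule continuous_imp_measurable_on_sets_lebesgue)
  obtain B where B: "\<And>x. x \<in> closure \<Omega> \<Longrightarrow> \<bar>f x\<bar> \<le> B"
    using compact_imp_bounded[OF compact_continuous_image[OF f compact_closure[THEN iffD2, OF \<Omega>(2)]]]
    by (auto simp: bounded_iff)
  have "integrable (lebesgue_on \<Omega>) (\<lambda>x. (f x)\<^sup>2)"
  proof (rule integrable_const_bound[where B="B\<^sup>2"])
    show "AE x in lebesgue_on \<Omega>. norm ((f x)\<^sup>2) \<le> B\<^sup>2"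
    proof (rule AE_I2)
      fix x assume "x \<in> space (lebesgue_on \<Omega>)"
      then have "\<bar>f x\<bar> \<le> B"
        using B closure_subset by (auto simp: space_restrict_space)
      then show "norm ((f x)\<^sup>2) \<le> B\<^sup>2"
        by (simp add: power2_le_iff_abs_le[OF order_trans[OF abs_ge_zero]])
    qed
  qed (use fm in measurable)
  with fm show ?thesis
    by (simp add: L2_fun_def)
qed

lemma relu_net_continuous:
  assumes "\<psi> \<in> relu_nets k c1 c2 n"
  shows "continuous_on S \<psi>"
proof -
  from assms obtain a w b where "\<psi> = (\<lambda>x. \<Sum>i<n. a i * relu_pow k (w i \<bullet> x + b i))"
    unfolding relu_nets_def by blast
  then show ?thesis
    unfolding relu_pow_def by (auto intro!: continuous_intros)
qed

text \<open>Surplus neurons get output weight zero.\<close>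

lemma relu_nets_mono:
  assumes c: "c1 \<le> c2" and mn: "m \<le> n"
  shows "relu_nets k c1 c2 m \<subseteq> (relu_nets k c1 c2 n :: ('a::euclidean_space \<Rightarrow> real) set)"
proof
  fix \<psi> :: "'a \<Rightarrow> real"
  assume "\<psi> \<in> relu_nets k c1 c2 m"
  then obtain a w b where wb: "\<forall>i<m. norm (w i) = 1 \<and> b i \<in> {c1..c2}"
    and \<psi>: "\<psi> = (\<lambda>x. \<Sum>i<m. a i * relu_pow k (w i \<bullet> x + b i))"
    unfolding relu_nets_def by blast
  obtain e :: 'a where e: "e \<in> Basis"
    using nonempty_Basis by blast
  define a' where "a' i = (if i < m then a i else 0)" for i
  define w' where "w' i = (if i < m then w i else e)" for i
  define b' where "b' i = (if i < m then b i else c1)" for i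
  have "\<forall>i<n. norm (w' i) = 1 \<and> b' i \<in> {c1..c2}"
    using wb e c by (auto simp: w'_def b'_def)
  moreover have "\<psi> = (\<lambda>x. \<Sum>i<n. a' i * relu_pow k (w' i \<bullet> x + b' i))"
  proof
    fix x
    have "(\<Sum>i<n. a' i * relu_pow k (w' i \<bullet> x + b' i)) = (\<Sum>i<m. a' i * relu_pow k (w' i \<bullet> x + b' i))"
      by (rule sum.mono_neutral_right) (use mn in \<open>auto simp: a'_def\<close>)
    also have "\<dots> = (\<Sum>i<m. a i * relu_pow k (w i \<bullet> x + b i))"
      by (rule sum.cong) (auto simp: a'_def w'_def b'_def)
    finally show "\<psi> x = (\<Sum>i<n. a' i * relu_pow k (w' i \<bullet> x + b' i))"
      using \<psi> by simp
  qed
  ultimately show "\<psi> \<in> relu_nets k c1 c2 n"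
    unfolding relu_nets_def by blast
qed

lemma relu_nets_approx_triangle:
  assumes \<Omega>: "open \<Omega>" "bounded \<Omega>" and c: "c1 \<le> c2"
    and v: "v \<in> H1 \<Omega>" and l: "l \<in> H1 \<Omega>" and \<psi>: "\<psi> \<in> relu_nets k c1 c2 m" and mn: "m \<le> n"
  shows "\<exists>\<eta>\<in>relu_nets k c1 c2 n.
    H1_norm \<Omega> (\<lambda>x. v x - \<eta> x) \<le> H1_norm \<Omega> (\<lambda>x. v x - l x) + H1_norm \<Omega> (\<lambda>x. l x - \<psi> x)"
proof (rule bexI[of _ \<psi>])
  show "\<psi> \<in> relu_nets k c1 c2 n"
    using relu_nets_mono[OF c mn] \<psi> by blast
  have "L2_fun \<Omega> l"
    using l unfolding H1_def by blast
  moreover have "L2_fun \<Omega> \<psi>"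
    using sets_lebesgue_open[OF \<Omega>(1)] \<Omega>(2) relu_net_continuous[OF \<psi>]
    by (rule L2_fun_continuous_on_closure)
  ultimately have "L2_fun \<Omega> (\<lambda>x. l x - \<psi> x)"
    using L2_fun_lincomb[of \<Omega> l \<psi> 1 "- 1"] by simp
  from H1_norm_triangle[OF \<Omega>(1) H1_diff[OF v l] this]
  show "H1_norm \<Omega> (\<lambda>x. v x - \<psi> x) \<le> H1_norm \<Omega> (\<lambda>x. v x - l x) + H1_norm \<Omega> (\<lambda>x. l x - \<psi> x)"
    by simp
qed

text \<open>Only openness and boundedness of \<open>\<Omega>\<close> and \<open>c1 \<le> c2\<close> are used below; the other
  hypotheses are what the density assumption \<open>dense\<close> needs in the paper.\<close>

theorem lemma4:
  fixes \<Omega> :: "'a::euclidean_space set" and k :: nat and c1 c2 :: real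
    and V :: "('a \<Rightarrow> real) set"
  assumes dom: "open \<Omega>" "connected \<Omega>" "bounded \<Omega>" "\<Omega> \<noteq> {}"
    and k: "k \<ge> 1"
    and c12: "c1 < c2"
      "c1 < Inf {w \<bullet> x | w x. norm w = 1 \<and> x \<in> \<Omega>}"
      "Sup {w \<bullet> x | w x. norm w = 1 \<and> x \<in> \<Omega>} < c2"
    and dense: "\<And>u \<epsilon>. u \<in> H1 \<Omega> \<Longrightarrow> \<epsilon> > 0 \<Longrightarrow>
       \<exists>n. \<exists>\<psi>\<in>relu_nets k c1 c2 n. H1_norm \<Omega> (\<lambda>x. u x - \<psi> x) \<le> \<epsilon>"
    and V: "H1_compact \<Omega> V"
  shows "\<forall>\<epsilon>>0. \<exists>n0. \<forall>v\<in>V. \<forall>n>n0.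
           \<exists>\<psi>\<in>relu_nets k c1 c2 n. H1_norm \<Omega> (\<lambda>x. v x - \<psi> x) \<le> \<epsilon>"
proof (intro allI impI; rule ccontr)
  fix \<epsilon> :: real
  assume "\<epsilon> > 0" and "\<not> (\<exists>n0. \<forall>v\<in>V. \<forall>n>n0. \<exists>\<psi>\<in>relu_nets k c1 c2 n. H1_norm \<Omega> (\<lambda>x. v x - \<psi> x) \<le> \<epsilon>)"
  then obtain s N where s: "\<And>j. s j \<in> V" "\<And>j. N j > j"
    and bad: "\<And>j \<psi>. \<psi> \<in> relu_nets k c1 c2 (N j) \<Longrightarrow> H1_norm \<Omega> (\<lambda>x. s j x - \<psi> x) > \<epsilon>"
    by (metis not_le)
  obtain l r where l: "l \<in> V" and r: "strict_mono r"
    and lim: "(\<lambda>j. H1_norm \<Omega> (\<lambda>x. s (r j) x - l x)) \<longlonglongrightarrow> 0"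
    using V s(1) unfolding H1_compact_def by blast
  have VH: "V \<subseteq> H1 \<Omega>"
    using V unfolding H1_compact_def by blast
  obtain m \<psi> where \<psi>: "\<psi> \<in> relu_nets k c1 c2 m" and l\<psi>: "H1_norm \<Omega> (\<lambda>x. l x - \<psi> x) \<le> \<epsilon> / 2"
    using dense[of l "\<epsilon> / 2"] l VH \<open>\<epsilon> > 0\<close> by auto
  have "\<forall>\<^sub>F j in sequentially. H1_norm \<Omega> (\<lambda>x. s (r j) x - l x) < \<epsilon> / 2"
    using order_tendstoD(2)[OF lim, of "\<epsilon> / 2"] \<open>\<epsilon> > 0\<close> by simp
  moreover have "\<forall>\<^sub>F j in sequentially. m \<le> r j"
    using eventually_ge_at_top[of m] by eventually_elim (meson seq_suble[OF r] order_trans)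
  ultimately obtain j where j: "H1_norm \<Omega> (\<lambda>x. s (r j) x - l x) < \<epsilon> / 2" "m \<le> r j"
    unfolding eventually_sequentially by (metis order_refl max.cobounded1 max.cobounded2)
  obtain \<psi>' where "\<psi>' \<in> relu_nets k c1 c2 (N (r j))"
    and "H1_norm \<Omega> (\<lambda>x. s (r j) x - \<psi>' x) \<le> H1_norm \<Omega> (\<lambda>x. s (r j) x - l x) + H1_norm \<Omega> (\<lambda>x. l x - \<psi> x)"
    using relu_nets_approx_triangle[OF dom(1,3) less_imp_le[OF c12(1)] _ _ \<psi>, of "s (r j)" l "N (r j)"]
      s VH l j(2) by (meson less_imp_le order_trans subsetD)
  with bad j(1) l\<psi> show False
    by fastforce
qed

end
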